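(* There is a constant $0<C<\infty$ such that for all $0<r\le1$ and all $u,v\in\mathbb{C}$, \[\big|\eta_u(B(0,r))-\eta_v(B(0,r))\big|\le C|u-v|^{1/2},\] where $B(0,r)$ is the closed Korányi ball in $\mathbb{H}$ of radius $r$ centered at the identity $0$.
   Context: $\mathbb{H}=\mathbb{C}\times\mathbb{R}$ with group law $(u,s)\cdot(v,t)=(u+v,s+t+\mathrm{Im}(\bar u v))$ and Korányi metric $d(p,q)=\|q^{-1}\cdot p\|$, $\|(u,s)\|=(|u|^4+4s^2)^{1/4}$. For $u\in\mathbb{C}$, $\pi^{-1}(u)=\{u\}\times\mathbb{R}$ is the vertical line over $u$, and $\eta_u$ is the $2$-dimensional Hausdorff measure (with respect to the Korányi metric) restricted to $\pi^{-1}(u)$. *)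

theory Defs
  imports "HOL-Analysis.Analysis"
begin

type_synonym heis = "complex \<times> real"

definition heis_mult :: "heis \<Rightarrow> heis \<Rightarrow> heis" where
  "heis_mult p q = (fst p + fst q, snd p + snd q + Im (cnj (fst p) * fst q))"

definition heis_inv :: "heis \<Rightarrow> heis" where
  "heis_inv p = (- fst p, - snd p)"

definition kor_norm :: "heis \<Rightarrow> real" where
  "kor_norm p = ((cmod (fst p)) ^ 4 + 4 * (snd p)\<^sup>2) powr (1/4)"

definition kor_dist :: "heis \<Rightarrow> heis \<Rightarrow> real" where
  "kor_dist p q = kor_norm (heis_mult (heis_inv q) p)"

text \<open>Diameter w.r.t. the Koranyi metric (0 for the empty set).\<close>
definition kor_diam :: "heis set \<Rightarrow> ennreal" where
  "kor_diam E = (SUP p\<in>E. SUP q\<in>E. ennreal (kor_dist p q))"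

definition hausdorff_content :: "nat \<Rightarrow> real \<Rightarrow> heis set \<Rightarrow> ennreal" where
  "hausdorff_content s \<delta> A =
     (INF E\<in>{E :: nat \<Rightarrow> heis set. A \<subseteq> (\<Union>i. E i) \<and> (\<forall>i. kor_diam (E i) \<le> ennreal \<delta>)}.
        (\<Sum>i. kor_diam (E i) ^ s))"

definition hausdorff :: "nat \<Rightarrow> heis set \<Rightarrow> ennreal" where
  "hausdorff s A = (SUP \<delta>\<in>{0<..}. hausdorff_content s \<delta> A)"

definition vline :: "complex \<Rightarrow> heis set" where
  "vline u = {u} \<times> UNIV"

definition eta :: "complex \<Rightarrow> heis set \<Rightarrow> ennreal" where
  "eta u A = hausdorff 2 (A \<inter> vline u)"

definition kor_cball :: "heis \<Rightarrow> real \<Rightarrow> heis set" where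
  "kor_cball p r = {q. kor_dist q p \<le> r}"

end

theory Submission
  imports Defs
begin

text \<open>On a vertical line the Koranyi distance is \<open>sqrt (2 |s - t|)\<close>, a snowflake of the
  Euclidean distance, so \<open>\<H>\<^sup>2\<close> on the line is twice Lebesgue measure in the
  \<open>t\<close>-coordinate: cutting a segment into short pieces gives the upper bound, and the lower
  bound holds because the slice of a set of diameter \<open>D\<close> fits into an interval of length
  \<open>D\<^sup>2 / 2\<close>. The ball \<open>B(0, r)\<close> meets the line over \<open>u\<close> in a segment of
  length \<open>sqrt (r\<^sup>4 - |u|\<^sup>4)\<close> when \<open>|u| \<le> r\<close>, so
  \<open>\<eta>\<^sub>u(B(0, r)) = 2 sqrt (max 0 (r\<^sup>4 - |u|\<^sup>4))\<close>. As \<open>sqrt\<close> is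
  \<open>1/2\<close>-Hoelder with constant 1 and \<open>a \<mapsto> min a r ^ 4\<close> is 4-Lipschitz for
  \<open>r \<le> 1\<close>, the estimate holds with \<open>C = 4\<close>.\<close>

lemma kor_dist_vertical: "kor_dist (u, s) (u, t) = sqrt (2 * \<bar>s - t\<bar>)"
proof -
  have "4 * (s - t)\<^sup>2 = (2 * \<bar>s - t\<bar>) powr 2"
    by (simp add: power2_eq_square powr_numeral)
  then have "(4 * (s - t)\<^sup>2) powr (1/4) = (2 * \<bar>s - t\<bar>) powr (1/2)"
    by (simp only: powr_powr) simp
  then show ?thesis
    by (simp add: kor_dist_def kor_norm_def heis_mult_def heis_inv_def powr_half_sqrt)
qed

lemma kor_dist_zero: "kor_dist (u, t) (0, 0) = (cmod u ^ 4 + 4 * t\<^sup>2) powr (1/4)"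
  by (simp add: kor_dist_def kor_norm_def heis_mult_def heis_inv_def)

lemma kor_dist_le_kor_diam: "p \<in> E \<Longrightarrow> q \<in> E \<Longrightarrow> ennreal (kor_dist p q) \<le> kor_diam E"
  unfolding kor_diam_def by (metis SUP_upper2 order_refl)

lemma kor_diam_vertical_segment_le:
  assumes "a \<le> b"
  shows "kor_diam ({u} \<times> {a..b}) \<le> ennreal (sqrt (2 * (b - a)))"
  unfolding kor_diam_def
proof (intro SUP_least)
  fix p q assume "p \<in> {u} \<times> {a..b}" "q \<in> {u} \<times> {a..b}"
  then obtain s t where "p = (u, s)" "q = (u, t)" "s \<in> {a..b}" "t \<in> {a..b}" by auto
  then show "ennreal (kor_dist p q) \<le> ennreal (sqrt (2 * (b - a)))"
    by (auto simp: kor_dist_vertical intro!: ennreal_leI split: abs_split)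
qed

lemma real_set_subset_interval:
  fixes F :: "real set"
  assumes "\<And>s t. s \<in> F \<Longrightarrow> t \<in> F \<Longrightarrow> s - t \<le> c"
  shows "\<exists>x. F \<subseteq> {x..x + c}"
proof (cases "F = {}")
  case False
  have "F \<subseteq> {Inf F..Inf F + c}"
  proof
    fix t assume t: "t \<in> F"
    have "bdd_below F" using assms[OF t] by (intro bdd_belowI[of _ "t - c"]) (auto simp: algebra_simps)
    then have "Inf F \<le> t" using t by (rule cInf_lower[rotated])
    moreover have "t - c \<le> Inf F"
      using assms[OF t] by (intro cInf_greatest[OF False]) (auto simp: algebra_simps)
    ultimately show "t \<in> {Inf F..Inf F + c}" by simp
  qed
  then show ?thesis by blast
qed simp

lemma vertical_slice_in_interval:
  "\<exists>I \<in> sets lborel. {t. (u, t) \<in> E} \<subseteq> I \<and> 2 * emeasure lborel I \<le> kor_diam E ^ 2"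
proof (cases "kor_diam E = \<infinity>")
  case True
  then show ?thesis by (intro bexI[of _ UNIV]) (auto simp: top_power_ennreal)
next
  case False
  define D where "D = enn2real (kor_diam E)"
  have D: "kor_diam E = ennreal D" "0 \<le> D" using False by (auto simp: D_def less_top)
  have "s - t \<le> D\<^sup>2 / 2" if "s \<in> {t. (u, t) \<in> E}" "t \<in> {t. (u, t) \<in> E}" for s t
  proof -
    have "sqrt (2 * \<bar>s - t\<bar>) \<le> D"
      using kor_dist_le_kor_diam[of "(u, s)" E "(u, t)"] that D by (simp add: kor_dist_vertical)
    then have "(sqrt (2 * \<bar>s - t\<bar>))\<^sup>2 \<le> D\<^sup>2" by (intro power_mono) auto
    then show ?thesis by (simp add: abs_if split: if_splits)
  qed
  then obtain x where x: "{t. (u, t) \<in> E} \<subseteq> {x..x + D\<^sup>2 / 2}"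
    using real_set_subset_interval by blast
  have "ennreal (D\<^sup>2) = ennreal 2 * ennreal (D\<^sup>2 / 2)"
    by (subst ennreal_mult[symmetric]) auto
  then have "2 * emeasure lborel {x..x + D\<^sup>2 / 2} = kor_diam E ^ 2"
    using D by (simp add: ennreal_power)
  then show ?thesis using x by (intro bexI[of _ "{x..x + D\<^sup>2 / 2}"]) auto
qed

lemma hausdorff_content_vertical_segment_ge:
  assumes cover: "{u} \<times> {a..b} \<subseteq> (\<Union>i. E i)"
  shows "ennreal (2 * (b - a)) \<le> (\<Sum>i. kor_diam (E i) ^ 2)"
proof -
  have "\<forall>i. \<exists>I. I \<in> sets lborel \<and> {t. (u, t) \<in> E i} \<subseteq> I \<and>
      2 * emeasure lborel I \<le> kor_diam (E i) ^ 2"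
    using vertical_slice_in_interval by blast
  then obtain I where I: "\<And>i. I i \<in> sets lborel" "\<And>i. {t. (u, t) \<in> E i} \<subseteq> I i"
    "\<And>i. 2 * emeasure lborel (I i) \<le> kor_diam (E i) ^ 2"
    by (metis choice)
  have "{a..b} \<subseteq> (\<Union>i. I i)" using cover I(2) by blast
  have "ennreal (2 * (b - a)) = 2 * emeasure lborel {a..b}"
    using ennreal_mult[of 2 "b - a"] by (cases "a \<le> b") (simp_all add: ennreal_neg)
  also have "\<dots> \<le> 2 * emeasure lborel (\<Union>i. I i)"
    using \<open>{a..b} \<subseteq> (\<Union>i. I i)\<close> I(1) by (intro mult_left_mono emeasure_mono) auto
  also have "\<dots> \<le> 2 * (\<Sum>i. emeasure lborel (I i))"
    using I(1) by (intro mult_left_mono emeasure_subadditive_countably) auto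
  also have "\<dots> = (\<Sum>i. 2 * emeasure lborel (I i))" by simp
  also have "\<dots> \<le> (\<Sum>i. kor_diam (E i) ^ 2)" using I(3) by (intro suminf_le) auto
  finally show ?thesis .
qed

lemma atLeastAtMost_subset_UN_subintervals:
  fixes a b :: real
  assumes "0 < n"
  shows "{a..b} \<subseteq> (\<Union>i<n. {a + real i * ((b - a) / n) .. a + real (Suc i) * ((b - a) / n)})"
proof
  fix t assume t: "t \<in> {a..b}"
  define l where "l = (b - a) / n"
  have l: "real n * l = b - a" using assms by (simp add: l_def)
  have "\<exists>i<n. a + real i * l \<le> t \<and> t \<le> a + real (Suc i) * l"
  proof (cases "t = b")
    case True
    have "0 \<le> l" using t assms by (simp add: l_def)
    then show ?thesis using True assms l
      by (intro exI[of _ "n - 1"]) (auto simp: of_nat_diff algebra_simps)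
  next
    case False
    then have "0 < l" using t assms by (simp add: l_def)
    define i where "i = nat \<lfloor>(t - a) / l\<rfloor>"
    have i: "real i = \<lfloor>(t - a) / l\<rfloor>" using t \<open>0 < l\<close> by (simp add: i_def)
    have i_le: "real i \<le> (t - a) / l" and i_gt: "(t - a) / l < real i + 1"
      using i by linarith+
    have "(t - a) / l < real n"
      using \<open>0 < l\<close> l False t by (auto simp: pos_divide_less_eq mult.commute)
    then have "i < n" using i_le by (meson order_le_less_trans of_nat_less_iff)
    moreover have "real i * l \<le> t - a" "t - a < (real i + 1) * l"
      using i_le i_gt \<open>0 < l\<close> by (simp_all add: pos_le_divide_eq pos_divide_less_eq)
    ultimately show ?thesis by (intro exI[of _ i]) (simp add: algebra_simps)
  qed
  then show "t \<in> (\<Union>i<n. {a + real i * ((b - a) / n) .. a + real (Suc i) * ((b - a) / n)})"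
    by (auto simp: l_def)
qed

lemma hausdorff_content_vertical_segment_le:
  assumes "a \<le> b" "0 < \<delta>"
  shows "hausdorff_content 2 \<delta> ({u} \<times> {a..b}) \<le> ennreal (2 * (b - a))"
proof -
  obtain n :: nat where n: "2 * (b - a) / \<delta>\<^sup>2 < n" using reals_Archimedean2 by blast
  moreover have "0 \<le> 2 * (b - a) / \<delta>\<^sup>2" using assms by simp
  ultimately have "0 < n" by linarith
  define l where "l = (b - a) / n"
  have l: "0 \<le> l" "real n * l = b - a" using assms \<open>0 < n\<close> by (simp_all add: l_def)
  have "2 * l < \<delta>\<^sup>2" using n assms \<open>0 < n\<close> by (simp add: l_def field_simps)
  then have "sqrt (2 * l) \<le> \<delta>" using assms by (simp add: real_sqrt_le_iff real_le_lsqrt)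
  define E where "E i = (if i < n then {u} \<times> {a + real i * l .. a + real (Suc i) * l} else {})" for i
  have diam_E: "kor_diam (E i) \<le> (if i < n then ennreal (sqrt (2 * l)) else 0)" for i
    using kor_diam_vertical_segment_le[of "a + real i * l" "a + real (Suc i) * l" u] l
    by (auto simp: E_def kor_diam_def bot_ennreal algebra_simps)
  have "{u} \<times> {a..b} \<subseteq> (\<Union>i. E i)"
    using atLeastAtMost_subset_UN_subintervals[OF \<open>0 < n\<close>, of a b] by (auto simp: E_def l_def)
  moreover have "kor_diam (E i) \<le> ennreal \<delta>" for i
    using diam_E[of i] \<open>sqrt (2 * l) \<le> \<delta>\<close> by (auto split: if_splits intro: order_trans ennreal_leI)
  ultimately have "hausdorff_content 2 \<delta> ({u} \<times> {a..b}) \<le> (\<Sum>i. kor_diam (E i) ^ 2)"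
    unfolding hausdorff_content_def by (intro INF_lower) auto
  also have "\<dots> = (\<Sum>i<n. kor_diam (E i) ^ 2)"
    by (intro suminf_finite) (auto simp: E_def kor_diam_def bot_ennreal)
  also have "\<dots> \<le> (\<Sum>i<n. ennreal (2 * l))"
  proof (intro sum_mono)
    fix i assume "i \<in> {..<n}"
    then have "kor_diam (E i) ^ 2 \<le> ennreal (sqrt (2 * l)) ^ 2"
      using diam_E[of i] by (intro power_mono) auto
    then show "kor_diam (E i) ^ 2 \<le> ennreal (2 * l)" using l by (simp add: ennreal_power)
  qed
  also have "\<dots> = ennreal (real n * (2 * l))"
    using l by (simp add: ennreal_of_nat_eq_real_of_nat ennreal_mult)
  also have "\<dots> = ennreal (2 * (b - a))"
    by (metis l(2) mult.left_commute)
  finally show ?thesis .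
qed

lemma hausdorff_content_empty: "0 < s \<Longrightarrow> hausdorff_content s \<delta> {} = 0"
  unfolding hausdorff_content_def
  by (rule antisym, rule INF_lower2[of "\<lambda>_. {}"]) (auto simp: kor_diam_def bot_ennreal zero_power)

lemma hausdorff_vertical_segment: "hausdorff 2 ({u} \<times> {a..b}) = ennreal (2 * (b - a))"
proof (cases "a \<le> b")
  case True
  have "hausdorff_content 2 \<delta> ({u} \<times> {a..b}) = ennreal (2 * (b - a))" if "0 < \<delta>" for \<delta>
  proof (rule antisym)
    show "hausdorff_content 2 \<delta> ({u} \<times> {a..b}) \<le> ennreal (2 * (b - a))"
      using True that by (rule hausdorff_content_vertical_segment_le)
    show "ennreal (2 * (b - a)) \<le> hausdorff_content 2 \<delta> ({u} \<times> {a..b})"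
      unfolding hausdorff_content_def
      by (intro INF_greatest) (blast intro: hausdorff_content_vertical_segment_ge)
  qed
  then show ?thesis unfolding hausdorff_def by (simp add: gt_ex)
next
  case False
  then show ?thesis by (simp add: hausdorff_def hausdorff_content_empty ennreal_neg)
qed

lemma powr_quarter_le_iff:
  fixes x r :: real
  assumes "0 \<le> x" "0 < r"
  shows "x powr (1/4) \<le> r \<longleftrightarrow> x \<le> r ^ 4"
proof -
  have "x powr (1/4) \<le> r \<longleftrightarrow> (x powr (1/4)) ^ 4 \<le> r ^ 4"
    using assms by (intro power_mono_iff[symmetric]) auto
  also have "(x powr (1/4)) ^ 4 = x"
    using assms by (cases "x = 0") (simp_all add: powr_power)
  finally show ?thesis .
qed

text \<open>\<open>sqrt\<close> is odd (\<open>sqrt (- x) = - sqrt x\<close>), so for \<open>cmod u > r\<close> the interval is empty.\<close>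
lemma kor_cball_zero_inter_vline:
  fixes u :: complex and r :: real
  assumes "0 < r"
  defines "h \<equiv> sqrt (r ^ 4 - cmod u ^ 4) / 2"
  shows "kor_cball (0, 0) r \<inter> vline u = {u} \<times> {-h..h}"
proof -
  have "(u, t) \<in> kor_cball (0, 0) r \<longleftrightarrow> t \<in> {-h..h}" for t
  proof -
    have "(u, t) \<in> kor_cball (0, 0) r \<longleftrightarrow> (2 * t)\<^sup>2 \<le> r ^ 4 - cmod u ^ 4"
      using assms
      by (simp add: kor_cball_def kor_dist_zero powr_quarter_le_iff power_mult_distrib
          le_diff_eq add.commute)
    also have "\<dots> \<longleftrightarrow> sqrt ((2 * t)\<^sup>2) \<le> sqrt (r ^ 4 - cmod u ^ 4)"
      by (rule real_sqrt_le_iff[symmetric])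
    also have "\<dots> \<longleftrightarrow> t \<in> {-h..h}"
      unfolding real_sqrt_abs h_def by (auto simp: abs_le_iff)
    finally show ?thesis .
  qed
  then show ?thesis unfolding vline_def by blast
qed

lemma eta_kor_cball_zero:
  assumes "0 < r"
  shows "eta u (kor_cball (0, 0) r) = ennreal (2 * sqrt (max 0 (r ^ 4 - cmod u ^ 4)))"
proof -
  have "eta u (kor_cball (0, 0) r) = ennreal (2 * sqrt (r ^ 4 - cmod u ^ 4))"
    using assms by (simp add: eta_def kor_cball_zero_inter_vline hausdorff_vertical_segment)
  moreover have "ennreal (2 * sqrt R) = ennreal (2 * sqrt (max 0 R))" for R :: real
    by (cases "0 \<le> R") (simp_all add: ennreal_neg)
  ultimately show ?thesis by simp
qed

lemma abs_sqrt_diff_le: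
  fixes x y :: real
  assumes "0 \<le> x" "0 \<le> y"
  shows "\<bar>sqrt x - sqrt y\<bar> \<le> sqrt \<bar>x - y\<bar>"
proof -
  have "sqrt x - sqrt y \<le> sqrt (x - y)" if "0 \<le> y" "y \<le> x" for x y :: real
    using sqrt_add_le_add_sqrt[of y "x - y"] that by simp
  then show ?thesis using assms
    by (cases "y \<le> x") (auto simp: abs_if abs_minus_commute)
qed

lemma abs_sqrt_truncated_fourth_diff_le:
  fixes a b r :: real
  assumes "0 \<le> a" "0 \<le> b" "0 \<le> r" "r \<le> 1"
  shows "\<bar>sqrt (max 0 (r ^ 4 - a ^ 4)) - sqrt (max 0 (r ^ 4 - b ^ 4))\<bar> \<le> 2 * sqrt \<bar>a - b\<bar>"
proof -
  have trunc: "max 0 (r ^ 4 - x ^ 4) = r ^ 4 - min x r ^ 4" if "0 \<le> x" for x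
    using that assms power_mono[of x r 4] power_mono[of r x 4] by (auto simp: min_def max_def)
  have min_le: "min x r ^ 4 \<le> r ^ 4" if "0 \<le> x" for x
    using that assms by (intro power_mono) auto
  have "\<bar>sqrt (max 0 (r ^ 4 - a ^ 4)) - sqrt (max 0 (r ^ 4 - b ^ 4))\<bar>
      \<le> sqrt \<bar>(r ^ 4 - min a r ^ 4) - (r ^ 4 - min b r ^ 4)\<bar>"
    using abs_sqrt_diff_le[of "max 0 (r ^ 4 - a ^ 4)" "max 0 (r ^ 4 - b ^ 4)"]
    unfolding trunc[OF assms(1)] trunc[OF assms(2)] using min_le assms(1,2) by simp
  also have "\<bar>(r ^ 4 - min a r ^ 4) - (r ^ 4 - min b r ^ 4)\<bar> = \<bar>min a r ^ 4 - min b r ^ 4\<bar>"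
    by arith
  also have "\<dots> \<le> 4 * \<bar>min a r - min b r\<bar>"
    using norm_power_diff[of "min a r" "min b r" 4] assms by simp
  also have "\<dots> \<le> 4 * \<bar>a - b\<bar>" by (auto simp: min_def)
  finally show ?thesis by (simp add: real_sqrt_mult)
qed

theorem lemma4p5:
  shows "\<exists>C::real. 0 < C \<and>
    (\<forall>r u v. 0 < r \<and> r \<le> 1 \<longrightarrow>
       eta u (kor_cball (0,0) r) < \<infinity> \<and> eta v (kor_cball (0,0) r) < \<infinity> \<and>
       \<bar>enn2real (eta u (kor_cball (0,0) r)) - enn2real (eta v (kor_cball (0,0) r))\<bar>
         \<le> C * cmod (u - v) powr (1/2))"
proof (intro exI[of _ 4] conjI allI impI)
  fix r :: real and u v :: complex
  assume "0 < r \<and> r \<le> 1"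
  then have r: "0 < r" "r \<le> 1" by auto
  show "eta u (kor_cball (0,0) r) < \<infinity>" "eta v (kor_cball (0,0) r) < \<infinity>"
    using r by (simp_all add: eta_kor_cball_zero)
  define f where "f w = sqrt (max 0 (r ^ 4 - cmod w ^ 4))" for w
  have "\<bar>enn2real (eta u (kor_cball (0,0) r)) - enn2real (eta v (kor_cball (0,0) r))\<bar>
      = \<bar>2 * f u - 2 * f v\<bar>"
    using r by (simp add: eta_kor_cball_zero f_def)
  also have "\<dots> = 2 * \<bar>f u - f v\<bar>" by (simp add: abs_if)
  also have "\<dots> \<le> 4 * sqrt \<bar>cmod u - cmod v\<bar>"
    using abs_sqrt_truncated_fourth_diff_le[of "cmod u" "cmod v" r] r by (simp add: f_def)
  also have "\<dots> \<le> 4 * cmod (u - v) powr (1/2)"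
    using norm_triangle_ineq3[of u v] by (simp add: powr_half_sqrt)
  finally show "\<bar>enn2real (eta u (kor_cball (0,0) r)) - enn2real (eta v (kor_cball (0,0) r))\<bar>
      \<le> 4 * cmod (u - v) powr (1/2)" .
qed simp

end
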